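(* Let $T$ be dependent. For every formula $\varphi(\bar x,\bar y,\bar z)$ with $\bar y,\bar z$ finite there is $n<\omega$ (depending only on $\varphi$ and $T$) such that for every $\mathbf x\in K_0$ with $\ell g(\bar x)=\ell g(\bar{\mathbf d}_{\mathbf x})$ the set $$J_{\mathbf x,\varphi}=\{t\in I_{\mathbf x}:\ n_{\mathbf x,t}\ge 2\text{ and there are }\alpha_0,\dots,\alpha_{k-1}<\ell g(\bar c_{\mathbf x,t,0})\ (k=\ell g(\bar y))\text{ and }\bar b\in{}^{\ell g(\bar z)}(A_{\mathbf x}\cup\textstyle\bigcup\{\bar c_{\mathbf x,s}:s\in I_{\mathbf x}\setminus\{t\}\})$$ $$\text{with }\mathfrak C\models\varphi[\bar{\mathbf d}_{\mathbf x},\langle(\bar c_{\mathbf x,t,0})_{\alpha_i}:i<k\rangle,\bar b]\wedge\neg\varphi[\bar{\mathbf d}_{\mathbf x},\langle(\bar c_{\mathbf x,t,1})_{\alpha_i}:i<k\rangle,\bar b]\}$$ has at most $n$ elements.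
   Context: $T$ complete first-order, $\mathfrak C$ its monster model; dependent = NIP. $K_0$ is the family of $\mathbf x=(A,B,\bar{\mathbf c},\bar{\mathbf d})$ where $B\subseteq A$, $\bar{\mathbf d}$ is a sequence, $I=I_{\mathbf x}$ is a linear order, $\bar{\mathbf c}=\langle\bar c_{t,n}:t\in I,n<n_t\rangle$ with $1\le n_t\le\omega$, each $\bar c_{t,n}$ a finite sequence with $\ell g(\bar c_{t,n})$ depending only on $t$, $\bar c_t=\bar c_{t,0}{}^\frown\bar c_{t,1}{}^\frown\cdots$, and for each $t\in I$ the sequence $\langle\bar c_{t,n}:n<n_t\rangle$ is indiscernible over $A\cup\bigcup\{\bar c_s:s\in I\setminus\{t\}\}$. Write $A_{\mathbf x},\bar{\mathbf d}_{\mathbf x},I_{\mathbf x},\bar c_{\mathbf x,t},\bar c_{\mathbf x,t,n},n_{\mathbf x,t}$; $(\bar c)_\alpha$ denotes the $\alpha$-th entry of $\bar c$. *)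

theory Defs
  imports Main "HOL-Library.Extended_Nat"
begin

text \<open>Terms and formulas over function symbols 'f, relation symbols 'r and
  variables 'v. Symbols carry no fixed arity (equivalently: symbols are pairs
  name/arity).\<close>

datatype ('f, 'v) trm = Var 'v | App 'f "('f, 'v) trm list"

datatype ('f, 'r, 'v) fml =
    Eq "('f, 'v) trm" "('f, 'v) trm"
  | Rel 'r "('f, 'v) trm list"
  | Neg "('f, 'r, 'v) fml"
  | Conj "('f, 'r, 'v) fml" "('f, 'r, 'v) fml"
  | Ex 'v "('f, 'r, 'v) fml"

text \<open>A structure with universe the whole type 'a.\<close>
record ('f, 'r, 'a) struc =
  fn_of :: "'f \<Rightarrow> 'a list \<Rightarrow> 'a"
  rel_of :: "'r \<Rightarrow> 'a list \<Rightarrow> bool"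

fun eval :: "('f, 'r, 'a) struc \<Rightarrow> ('v \<Rightarrow> 'a) \<Rightarrow> ('f, 'v) trm \<Rightarrow> 'a" where
  "eval M s (Var v) = s v"
| "eval M s (App f ts) = fn_of M f (map (eval M s) ts)"

fun sat :: "('f, 'r, 'a) struc \<Rightarrow> ('v \<Rightarrow> 'a) \<Rightarrow> ('f, 'r, 'v) fml \<Rightarrow> bool" where
  "sat M s (Eq t u) = (eval M s t = eval M s u)"
| "sat M s (Rel r ts) = rel_of M r (map (eval M s) ts)"
| "sat M s (Neg \<phi>) = (\<not> sat M s \<phi>)"
| "sat M s (Conj \<phi> \<psi>) = (sat M s \<phi> \<and> sat M s \<psi>)"
| "sat M s (Ex v \<phi>) = (\<exists>a. sat M (s(v := a)) \<phi>)"

fun fvt :: "('f, 'v) trm \<Rightarrow> 'v set" where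
  "fvt (Var v) = {v}"
| "fvt (App f ts) = \<Union> (set (map fvt ts))"

fun fv :: "('f, 'r, 'v) fml \<Rightarrow> 'v set" where
  "fv (Eq t u) = fvt t \<union> fvt u"
| "fv (Rel r ts) = \<Union> (set (map fvt ts))"
| "fv (Neg \<phi>) = fv \<phi>"
| "fv (Conj \<phi> \<psi>) = fv \<phi> \<union> fv \<psi>"
| "fv (Ex v \<phi>) = fv \<phi> - {v}"

text \<open>psi(x,y) with x-variables Inl _ and y-variables Inr _ has the independence
  property in M: for every n there are tuples a_0..a_{n-1} shattered by psi.\<close>
definition has_IP :: "('f, 'r, 'a) struc \<Rightarrow> ('f, 'r, nat + nat) fml \<Rightarrow> bool" where
  "has_IP M \<psi> \<longleftrightarrow> (\<forall>n::nat. \<exists>a :: nat \<Rightarrow> nat \<Rightarrow> 'a. \<forall>S \<subseteq> {..<n}. \<exists>b :: nat \<Rightarrow> 'a.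
      \<forall>i<n. sat M (\<lambda>v. case v of Inl j \<Rightarrow> a i j | Inr j \<Rightarrow> b j) \<psi> \<longleftrightarrow> i \<in> S)"

definition dependent :: "('f, 'r, 'a) struc \<Rightarrow> bool" where
  "dependent M \<longleftrightarrow> (\<forall>\<psi> :: ('f, 'r, nat + nat) fml. \<not> has_IP M \<psi>)"

definition incr_seq :: "nat \<Rightarrow> enat \<Rightarrow> (nat \<Rightarrow> nat) \<Rightarrow> bool" where
  "incr_seq m N f \<longleftrightarrow> (\<forall>i j. i < j \<and> j < m \<longrightarrow> f i < f j) \<and> (\<forall>i<m. enat (f i) < N)"

text \<open>The sequence of L-tuples (c k : k < N) is indiscernible over P in M.
  Variable Inl (i, alpha) stands for the alpha-th entry of the i-th chosen tuple,
  Inr j for the j-th parameter.\<close>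
definition indisc :: "('f, 'r, 'a) struc \<Rightarrow> 'a set \<Rightarrow> nat \<Rightarrow> enat \<Rightarrow> (nat \<Rightarrow> 'a list) \<Rightarrow> bool" where
  "indisc M P L N c \<longleftrightarrow>
    (\<forall>(\<psi> :: ('f, 'r, nat \<times> nat + nat) fml) (m::nat) (q::nat) (e :: nat \<Rightarrow> 'a) f g.
       fv \<psi> \<subseteq> {Inl (i, \<alpha>) | i \<alpha>. i < m \<and> \<alpha> < L} \<union> Inr ` {..<q}
       \<and> (\<forall>j<q. e j \<in> P) \<and> incr_seq m N f \<and> incr_seq m N g \<longrightarrow>
       (sat M (\<lambda>v. case v of Inl (i, \<alpha>) \<Rightarrow> c (f i) ! \<alpha> | Inr j \<Rightarrow> e j) \<psi>
        \<longleftrightarrow> sat M (\<lambda>v. case v of Inl (i, \<alpha>) \<Rightarrow> c (g i) ! \<alpha> | Inr j \<Rightarrow> e j) \<psi>))"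

text \<open>x = (A, B, c, d) with index set I; n t = n_{x,t}, L t = length of each c_{t,k},
  c t k = c_{x,t,k} (for k < n t), d = the sequence d_x indexed by 'i.\<close>

definition cset :: "(nat \<Rightarrow> 'a list) \<Rightarrow> enat \<Rightarrow> 'a set" where
  "cset ct N = (\<Union>k \<in> {k. enat k < N}. set (ct k))"

definition params :: "'a set \<Rightarrow> 't set \<Rightarrow> ('t \<Rightarrow> enat) \<Rightarrow> ('t \<Rightarrow> nat \<Rightarrow> 'a list) \<Rightarrow> 't \<Rightarrow> 'a set" where
  "params A I n c t = A \<union> (\<Union>s \<in> I - {t}. cset (c s) (n s))"

definition K0 :: "('f, 'r, 'a) struc \<Rightarrow> 'a set \<Rightarrow> 'a set \<Rightarrow> 't set \<Rightarrow> ('t \<Rightarrow> enat) \<Rightarrow> ('t \<Rightarrow> nat)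
    \<Rightarrow> ('t \<Rightarrow> nat \<Rightarrow> 'a list) \<Rightarrow> ('i \<Rightarrow> 'a) \<Rightarrow> bool" where
  "K0 M A B I n L c d \<longleftrightarrow> B \<subseteq> A
     \<and> (\<forall>t\<in>I. 1 \<le> n t \<and> n t \<le> \<infinity>)
     \<and> (\<forall>t\<in>I. \<forall>k. enat k < n t \<longrightarrow> length (c t k) = L t)
     \<and> (\<forall>t\<in>I. indisc M (params A I n c t) (L t) (n t) (c t))"

text \<open>phi(x,y,z): x-variables Inl i (matched with d i), y-variables Inr (Inl i),
  z-variables Inr (Inr j).\<close>
definition asg3 :: "('i \<Rightarrow> 'a) \<Rightarrow> (nat \<Rightarrow> 'a) \<Rightarrow> (nat \<Rightarrow> 'a) \<Rightarrow> 'i + nat + nat \<Rightarrow> 'a" where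
  "asg3 d y z = (\<lambda>v. case v of Inl i \<Rightarrow> d i | Inr (Inl i) \<Rightarrow> y i | Inr (Inr j) \<Rightarrow> z j)"

definition Jset :: "('f, 'r, 'a) struc \<Rightarrow> ('f, 'r, 'i + nat + nat) fml \<Rightarrow> nat \<Rightarrow> nat
    \<Rightarrow> 'a set \<Rightarrow> 't set \<Rightarrow> ('t \<Rightarrow> enat) \<Rightarrow> ('t \<Rightarrow> nat) \<Rightarrow> ('t \<Rightarrow> nat \<Rightarrow> 'a list) \<Rightarrow> ('i \<Rightarrow> 'a) \<Rightarrow> 't set" where
  "Jset M \<phi> k m A I n L c d = {t \<in> I. 2 \<le> n t \<and>
      (\<exists>(\<alpha> :: nat \<Rightarrow> nat) (b :: nat \<Rightarrow> 'a). (\<forall>i<k. \<alpha> i < L t) \<and> (\<forall>j<m. b j \<in> params A I n c t)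
         \<and> sat M (asg3 d (\<lambda>i. c t 0 ! \<alpha> i) b) \<phi>
         \<and> \<not> sat M (asg3 d (\<lambda>i. c t 1 ! \<alpha> i) b) \<phi>)}"

end

theory Submission
  imports Defs
begin

text \<open>Fix witnesses \<open>\<alpha>\<^sub>t, b\<^sub>t\<close> for the indices \<open>t\<close> in \<open>J\<close>. An entry of \<open>b\<^sub>t\<close> outside
  \<open>A\<close> lies in \<open>c\<^sub>s\<close> for exactly one \<open>s\<close>, so the digraph "some entry of \<open>b\<^sub>t\<close> lies in
  \<open>c\<^sub>s\<close>" has out-degree at most \<open>m\<close>, and every finite \<open>F \<subseteq> J\<close> has an independent
  subset \<open>T\<close> with \<open>|F| \<le> (2m+1) |T|\<close>. For \<open>t \<in> T\<close> the sequence \<open>c\<^sub>t\<close> is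
  indiscernible over a set containing all the other parameters, so the tuple \<open>c t 1\<close>
  can be replaced by \<open>c t 0\<close> without changing which patterns are realized by some
  \<open>x\<close>. Since \<open>d\<close> realizes any pattern \<open>S\<close> when \<open>c t 0\<close> is used for \<open>t \<in> S\<close> and
  \<open>c t 1\<close> otherwise, \<open>\<phi>(x; y, z)\<close> shatters the tuples \<open>(c t 0 ! \<alpha>\<^sub>t, b\<^sub>t)\<close>, \<open>t \<in> T\<close>.
  Dependence bounds \<open>|T|\<close> by some \<open>N\<close> depending only on \<open>\<phi>\<close>, hence \<open>|J| \<le> (2m+1) N\<close>.\<close>

section \<open>Renaming and satisfaction\<close>

lemma eval_map_trm: "eval M s (map_trm id \<sigma> t) = eval M (s \<circ> \<sigma>) t"
  by (induction t) (auto cong: map_cong)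

lemma fvt_map_trm: "fvt (map_trm id \<sigma> t) = \<sigma> ` fvt t"
  by (induction t) auto

lemma eval_cong: "(\<forall>v\<in>fvt t. s v = s' v) \<Longrightarrow> eval M s t = eval M s' t"
  by (induction t) (auto cong: map_cong)

lemma sat_cong: "(\<forall>v\<in>fv \<phi>. s v = s' v) \<Longrightarrow> sat M s \<phi> = sat M s' \<phi>"
proof (induction \<phi> arbitrary: s s')
  case (Eq t u)
  then show ?case
    using eval_cong[of t s s' M] eval_cong[of u s s' M] by simp
next
  case (Rel r ts)
  then have "map (eval M s) ts = map (eval M s') ts"
    using eval_cong by (fastforce intro: map_cong)
  then show ?case by (simp only: sat.simps)
next
  case (Conj \<phi>1 \<phi>2)
  then have "sat M s \<phi>1 = sat M s' \<phi>1" "sat M s \<phi>2 = sat M s' \<phi>2"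
    by auto
  then show ?case by simp
next
  case (Ex v \<phi>)
  then have "sat M (s(v := a)) \<phi> = sat M (s'(v := a)) \<phi>" for a
    by (intro Ex.IH) auto
  then show ?case by simp
qed simp

lemma finite_fv: "finite (fv \<phi>)"
proof -
  have "finite (fvt t)" for t :: "('f, 'v) trm"
    by (induction t) auto
  then show ?thesis
    by (induction \<phi>) auto
qed

text \<open>Capture-avoiding renaming of the free variables along \<open>\<sigma>\<close>: a variable bound at
  quantifier depth \<open>d\<close> is renamed to \<open>fr d\<close>, which must lie outside the range of \<open>\<sigma>\<close>.\<close>
fun rename_fml :: "(nat \<Rightarrow> 'w) \<Rightarrow> ('v \<Rightarrow> 'w) \<Rightarrow> nat \<Rightarrow> ('f, 'r, 'v) fml \<Rightarrow> ('f, 'r, 'w) fml" where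
  "rename_fml fr \<sigma> d (Eq t u) = Eq (map_trm id \<sigma> t) (map_trm id \<sigma> u)"
| "rename_fml fr \<sigma> d (Rel r ts) = Rel r (map (map_trm id \<sigma>) ts)"
| "rename_fml fr \<sigma> d (Neg \<phi>) = Neg (rename_fml fr \<sigma> d \<phi>)"
| "rename_fml fr \<sigma> d (Conj \<phi> \<psi>) = Conj (rename_fml fr \<sigma> d \<phi>) (rename_fml fr \<sigma> d \<psi>)"
| "rename_fml fr \<sigma> d (Ex v \<phi>) = Ex (fr d) (rename_fml fr (\<sigma>(v := fr d)) (Suc d) \<phi>)"

lemma sat_rename_fml:
  assumes "inj fr" "\<And>v. \<sigma> v \<notin> fr ` {d..}"
  shows "sat M s (rename_fml fr \<sigma> d \<phi>) = sat M (s \<circ> \<sigma>) \<phi>"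
  using assms(2)
proof (induction \<phi> arbitrary: \<sigma> d s)
  case (Ex v \<phi>)
  have fresh: "(\<sigma>(v := fr d)) w \<notin> fr ` {Suc d..}" for w
    using Ex.prems[of w] injD[OF assms(1)] by (cases "w = v") fastforce+
  have upd: "s(fr d := a) \<circ> \<sigma>(v := fr d) = (s \<circ> \<sigma>)(v := a)" for a
    using Ex.prems by (auto simp: fun_eq_iff)
  have "sat M (s(fr d := a)) (rename_fml fr (\<sigma>(v := fr d)) (Suc d) \<phi>)
      = sat M ((s \<circ> \<sigma>)(v := a)) \<phi>" for a
    using Ex.IH[OF fresh, of "s(fr d := a)"] by (simp only: upd)
  then show ?case by (simp add: comp_def)
qed (simp_all add: eval_map_trm comp_def)

lemma fv_rename_fml: "fv (rename_fml fr \<sigma> d \<phi>) \<subseteq> \<sigma> ` fv \<phi>"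
proof (induction \<phi> arbitrary: \<sigma> d)
  case (Ex v \<phi>)
  show ?case
  proof
    fix x assume "x \<in> fv (rename_fml fr \<sigma> d (Ex v \<phi>))"
    then have x: "x \<in> fv (rename_fml fr (\<sigma>(v := fr d)) (Suc d) \<phi>)" "x \<noteq> fr d"
      by auto
    then obtain w where "w \<in> fv \<phi>" "x = (\<sigma>(v := fr d)) w"
      using Ex.IH by blast
    with x(2) show "x \<in> \<sigma> ` fv (Ex v \<phi>)"
      by (cases "w = v") auto
  qed
next
  case (Conj \<phi>1 \<phi>2)
  then show ?case by (simp add: image_Un) blast
qed (auto simp: fvt_map_trm)

definition fml_true :: "('f, 'r, 'v) fml" where
  "fml_true = Ex undefined (Eq (Var undefined) (Var undefined))"

definition conjs :: "('f, 'r, 'v) fml list \<Rightarrow> ('f, 'r, 'v) fml" where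
  "conjs \<psi>s = foldr Conj \<psi>s fml_true"

lemma sat_conjs: "sat M s (conjs \<psi>s) \<longleftrightarrow> (\<forall>\<psi>\<in>set \<psi>s. sat M s \<psi>)"
  by (induction \<psi>s) (auto simp: conjs_def fml_true_def)

lemma fv_conjs: "fv (conjs \<psi>s) = (\<Union>\<psi>\<in>set \<psi>s. fv \<psi>)"
  by (induction \<psi>s) (auto simp: conjs_def fml_true_def)

lemma sat_foldr_Ex:
  "sat M s (foldr Ex vs \<psi>) \<longleftrightarrow> (\<exists>s'. (\<forall>v. v \<notin> set vs \<longrightarrow> s' v = s v) \<and> sat M s' \<psi>)"
proof (induction vs arbitrary: s)
  case Nil
  then show ?case by (auto simp: fun_eq_iff)
next
  case (Cons v vs)
  show ?case
  proof
    assume "sat M s (foldr Ex (v # vs) \<psi>)"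
    then obtain a where "sat M (s(v := a)) (foldr Ex vs \<psi>)"
      by auto
    then obtain s' where "\<forall>x. x \<notin> set vs \<longrightarrow> s' x = (s(v := a)) x" "sat M s' \<psi>"
      using Cons.IH by blast
    then show "\<exists>s'. (\<forall>x. x \<notin> set (v # vs) \<longrightarrow> s' x = s x) \<and> sat M s' \<psi>"
      by (intro exI[of _ s']) auto
  next
    assume "\<exists>s'. (\<forall>x. x \<notin> set (v # vs) \<longrightarrow> s' x = s x) \<and> sat M s' \<psi>"
    then obtain s' where s': "\<forall>x. x \<notin> set (v # vs) \<longrightarrow> s' x = s x" "sat M s' \<psi>"
      by blast
    then have "\<forall>x. x \<notin> set vs \<longrightarrow> s' x = (s(v := s' v)) x"
      by auto
    then have "sat M (s(v := s' v)) (foldr Ex vs \<psi>)"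
      using Cons.IH s'(2) by blast
    then show "sat M s (foldr Ex (v # vs) \<psi>)"
      by auto
  qed
qed

lemma fv_foldr_Ex: "fv (foldr Ex vs \<psi>) = fv \<psi> - set vs"
  by (induction vs) auto

section \<open>Independent sets in digraphs of bounded out-degree\<close>

lemma exists_small_in_degree:
  assumes "finite F" "F \<noteq> {}" and out: "\<forall>x\<in>F. card {y\<in>F. R x y} \<le> m"
  shows "\<exists>y\<in>F. card {x\<in>F. R x y} \<le> m"
proof (rule ccontr)
  assume "\<not> ?thesis"
  then have "(\<Sum>y\<in>F. Suc m) \<le> (\<Sum>y\<in>F. card {x\<in>F. R x y})"
    by (intro sum_mono) (auto simp: not_le)
  also have "\<dots> = (\<Sum>x\<in>F. card {y\<in>F. R x y})"
    using assms(1) by (intro sum_multicount_gen[symmetric]) auto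
  also have "\<dots> \<le> (\<Sum>x\<in>F. m)"
    using out by (intro sum_mono) auto
  finally show False
    using assms(1,2) by simp
qed

text \<open>Greedy choice: a vertex of in-degree at most \<open>m\<close> has at most \<open>2 m\<close>
  neighbours; keep it, discard them, and recurse.\<close>
lemma large_independent_subset:
  assumes "finite F" "\<forall>x\<in>F. card {y\<in>F. R x y} \<le> m"
  shows "\<exists>T\<subseteq>F. (\<forall>x\<in>T. \<forall>y\<in>T. R x y \<longrightarrow> x = y) \<and> card F \<le> (2 * m + 1) * card T"
  using assms
proof (induction "card F" arbitrary: F rule: less_induct)
  case less
  show ?case
  proof (cases "F = {}")
    case False
    obtain v where v: "v \<in> F" "card {x\<in>F. R x v} \<le> m"
      using exists_small_in_degree[OF less.prems(1) False less.prems(2)] by blast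
    define N where "N = insert v ({y\<in>F. R v y} \<union> {x\<in>F. R x v})"
    define F' where "F' = F - N"
    have "finite N" "N \<subseteq> F"
      using less.prems(1) v(1) by (auto simp: N_def)
    have "card N \<le> Suc (card ({y\<in>F. R v y} \<union> {x\<in>F. R x v}))"
      unfolding N_def by (rule card_insert_le_m1) auto
    also have "\<dots> \<le> Suc (card {y\<in>F. R v y} + card {x\<in>F. R x v})"
      using card_Un_le by simp
    finally have card_N: "card N \<le> 2 * m + 1"
      using v less.prems(2) by fastforce
    have lt: "card F' < card F"
      unfolding F'_def using \<open>N \<subseteq> F\<close> less.prems(1) v(1)
      by (intro psubset_card_mono) (auto simp: N_def)
    have out': "\<forall>x\<in>F'. card {y\<in>F'. R x y} \<le> m"
    proof
      fix x assume "x \<in> F'"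
      have "card {y\<in>F'. R x y} \<le> card {y\<in>F. R x y}"
        using less.prems(1) by (intro card_mono) (auto simp: F'_def)
      with \<open>x \<in> F'\<close> show "card {y\<in>F'. R x y} \<le> m"
        using less.prems(2) by (auto simp: F'_def)
    qed
    have "finite F'"
      using less.prems(1) by (simp add: F'_def)
    then obtain T where T: "T \<subseteq> F'" "\<forall>x\<in>T. \<forall>y\<in>T. R x y \<longrightarrow> x = y"
        "card F' \<le> (2 * m + 1) * card T"
      using less.hyps[OF lt _ out'] by blast
    have "finite T" "v \<notin> T"
      using T(1) less.prems(1) by (auto simp: F'_def N_def intro: finite_subset)
    have "card F = card F' + card N"
      using \<open>finite N\<close> \<open>N \<subseteq> F\<close> less.prems(1) unfolding F'_def
      by (simp add: card_Diff_subset card_mono)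
    also have "\<dots> \<le> (2 * m + 1) * card (insert v T)"
      using T(3) card_N \<open>finite T\<close> \<open>v \<notin> T\<close> by simp
    finally show ?thesis
      using T(1,2) v(1) by (intro exI[of _ "insert v T"]) (auto simp: F'_def N_def)
  qed simp
qed

section \<open>Shattering, pattern formulas and indiscernibility\<close>

definition realizes_pattern ::
    "('f, 'r, 'a) struc \<Rightarrow> ('f, 'r, 'x + 'y) fml \<Rightarrow> nat \<Rightarrow> (nat \<Rightarrow> 'y \<Rightarrow> 'a) \<Rightarrow> nat set \<Rightarrow> bool" where
  "realizes_pattern M \<phi> n W S \<longleftrightarrow> (\<exists>d. \<forall>i<n. i \<in> S \<longleftrightarrow> sat M (case_sum d (W i)) \<phi>)"

definition shatters ::
    "('f, 'r, 'a) struc \<Rightarrow> ('f, 'r, 'x + 'y) fml \<Rightarrow> nat \<Rightarrow> (nat \<Rightarrow> 'y \<Rightarrow> 'a) \<Rightarrow> bool" where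
  "shatters M \<phi> n W \<longleftrightarrow> (\<forall>S\<subseteq>{..<n}. realizes_pattern M \<phi> n W S)"

lemma finite_vars_Inl: "finite (Inl -` fv \<phi>)" and finite_vars_Inr: "finite (Inr -` fv \<phi>)"
  by (simp_all add: finite_vimageI finite_fv)

text \<open>The roles of the variable blocks are exchanged: the parameter block \<open>'x\<close> of
  \<open>\<phi>\<close> becomes the parameter side \<open>Inr\<close> of a formula in the sense of \<open>has_IP\<close>.\<close>
lemma dependent_imp_shatters_bounded:
  fixes M :: "('f, 'r, 'a) struc" and \<phi> :: "('f, 'r, 'x + 'y) fml"
  assumes "dependent M"
  obtains N where "\<And>W. \<not> shatters M \<phi> N W"
proof -
  define X where "X = Inl -` fv \<phi>"
  define Y where "Y = Inr -` fv \<phi>"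
  obtain hx :: "'x \<Rightarrow> nat" where hx: "inj_on hx X"
    using finite_imp_inj_to_nat_seg[OF finite_vars_Inl[of \<phi>]] unfolding X_def by blast
  obtain hy :: "'y \<Rightarrow> nat" where hy: "inj_on hy Y"
    using finite_imp_inj_to_nat_seg[OF finite_vars_Inr[of \<phi>]] unfolding Y_def by blast
  define \<sigma> :: "'x + 'y \<Rightarrow> nat + nat" where "\<sigma> = case_sum (\<lambda>x. Inr (2 * hx x)) (\<lambda>y. Inl (hy y))"
  define fr :: "nat \<Rightarrow> nat + nat" where "fr j = Inr (2 * j + 1)" for j
  have sat_\<psi>: "sat M s (rename_fml fr \<sigma> 0 \<phi>) = sat M (s \<circ> \<sigma>) \<phi>" for s
  proof (rule sat_rename_fml)
    show "inj fr"
      by (auto simp: inj_def fr_def)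
    show "\<sigma> v \<notin> fr ` {0..}" for v
      by (auto simp: fr_def \<sigma>_def split: sum.split) presburger
  qed
  have "\<not> has_IP M (rename_fml fr \<sigma> 0 \<phi>)"
    using assms unfolding dependent_def by blast
  then obtain N :: nat where no_IP: "\<not> (\<exists>a. \<forall>S\<subseteq>{..<N}. \<exists>b. \<forall>i<N.
      sat M (case_sum (a i) b) (rename_fml fr \<sigma> 0 \<phi>) \<longleftrightarrow> i \<in> S)"
    unfolding has_IP_def by (auto simp only: not_all)
  have "\<not> shatters M \<phi> N W" for W
  proof
    assume shatters: "shatters M \<phi> N W"
    define a where "a i j = W i (inv_into Y hy j)" for i j
    have "\<forall>S\<subseteq>{..<N}. \<exists>b. \<forall>i<N. sat M (case_sum (a i) b) (rename_fml fr \<sigma> 0 \<phi>) \<longleftrightarrow> i \<in> S"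
    proof (intro allI impI)
      fix S :: "nat set" assume "S \<subseteq> {..<N}"
      obtain d where d: "\<forall>i<N. i \<in> S \<longleftrightarrow> sat M (case_sum d (W i)) \<phi>"
        using shatters \<open>S \<subseteq> {..<N}\<close> unfolding shatters_def realizes_pattern_def by blast
      define b where "b j = d (inv_into X hx (j div 2))" for j
      have "sat M (case_sum (a i) b \<circ> \<sigma>) \<phi> = sat M (case_sum d (W i)) \<phi>" for i
      proof (rule sat_cong, intro ballI)
        fix v assume "v \<in> fv \<phi>"
        then show "(case_sum (a i) b \<circ> \<sigma>) v = case_sum d (W i) v"
          using hx hy by (cases v) (simp_all add: X_def Y_def \<sigma>_def a_def b_def)
      qed
      then show "\<exists>b. \<forall>i<N. sat M (case_sum (a i) b) (rename_fml fr \<sigma> 0 \<phi>) \<longleftrightarrow> i \<in> S"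
        using d by (intro exI[of _ b]) (simp add: sat_\<psi>)
    qed
    then show False
      using no_IP by blast
  qed
  then show ?thesis
    using that by blast
qed

text \<open>\<open>indisc\<close> asks for all parameter slots below some bound \<open>q\<close> to lie in \<open>P\<close>;
  the slots not occurring in \<open>\<psi>\<close> are padded with an arbitrary element of \<open>P\<close>.\<close>
lemma indisc_swap_0_1:
  fixes \<psi> :: "('f, 'r, nat \<times> nat + nat) fml"
  assumes ind: "indisc M P L N c" and "enat 1 < N"
    and fv_\<psi>: "fv \<psi> \<subseteq> {Inl (0, \<alpha>) | \<alpha>. \<alpha> < L} \<union> Inr ` {j. e j \<in> P}"
  shows "sat M (\<lambda>v. case v of Inl (_, \<alpha>) \<Rightarrow> c 1 ! \<alpha> | Inr j \<Rightarrow> e j) \<psi>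
     \<longleftrightarrow> sat M (\<lambda>v. case v of Inl (_, \<alpha>) \<Rightarrow> c 0 ! \<alpha> | Inr j \<Rightarrow> e j) \<psi>"
proof -
  define Q where "Q = Inr -` fv \<psi>"
  define q where "q = (if Q = {} then 0 else Suc (Max Q))"
  define e' where "e' j = (if j \<in> Q then e j else (SOME p. p \<in> P))" for j
  have "finite Q"
    unfolding Q_def by (rule finite_vars_Inr)
  then have "Q \<subseteq> {..<q}"
    by (auto simp: q_def less_Suc_eq_le)
  have e': "\<forall>j<q. e' j \<in> P"
  proof (intro allI impI)
    fix j :: nat assume "j < q"
    show "e' j \<in> P"
    proof (cases "j \<in> Q")
      case True
      with fv_\<psi> show ?thesis
        by (auto simp: Q_def e'_def)
    next
      case False
      with \<open>j < q\<close> obtain j' where "j' \<in> Q"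
        by (auto simp: q_def split: if_splits)
      with fv_\<psi> have "P \<noteq> {}"
        by (auto simp: Q_def)
      with False show ?thesis
        by (simp add: e'_def some_in_eq)
    qed
  qed
  have fv_\<psi>': "fv \<psi> \<subseteq> {Inl (i, \<alpha>) | i \<alpha>. i < 1 \<and> \<alpha> < L} \<union> Inr ` {..<q}"
  proof
    fix v assume "v \<in> fv \<psi>"
    then show "v \<in> {Inl (i, \<alpha>) | i \<alpha>. i < 1 \<and> \<alpha> < L} \<union> Inr ` {..<q}"
      using fv_\<psi> \<open>Q \<subseteq> {..<q}\<close> by (cases v) (auto simp: Q_def)
  qed
  have incr: "incr_seq 1 N (\<lambda>_. \<epsilon>)" if "\<epsilon> \<le> 1" for \<epsilon>
  proof -
    have "enat \<epsilon> < N"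
      using that by (intro le_less_trans[OF _ \<open>enat 1 < N\<close>]) simp
    then show ?thesis
      by (simp add: incr_seq_def)
  qed
  have "sat M (\<lambda>v. case v of Inl (i, \<alpha>) \<Rightarrow> c ((\<lambda>_. 1) i) ! \<alpha> | Inr j \<Rightarrow> e' j) \<psi>
     \<longleftrightarrow> sat M (\<lambda>v. case v of Inl (i, \<alpha>) \<Rightarrow> c ((\<lambda>_. 0) i) ! \<alpha> | Inr j \<Rightarrow> e' j) \<psi>"
    using fv_\<psi>' e' incr[of 1] incr[of 0]
    by (intro ind[unfolded indisc_def, rule_format, of \<psi> 1 q e'] conjI) simp_all
  moreover have "sat M (\<lambda>v. case v of Inl (_, \<alpha>) \<Rightarrow> c \<epsilon> ! \<alpha> | Inr j \<Rightarrow> e' j) \<psi>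
     \<longleftrightarrow> sat M (\<lambda>v. case v of Inl (_, \<alpha>) \<Rightarrow> c \<epsilon> ! \<alpha> | Inr j \<Rightarrow> e j) \<psi>" for \<epsilon>
    by (rule sat_cong) (auto simp: Q_def e'_def split: sum.split)
  ultimately show ?thesis
    by simp
qed

definition signed :: "bool \<Rightarrow> ('f, 'r, 'v) fml \<Rightarrow> ('f, 'r, 'v) fml" where
  "signed b \<psi> = (if b then \<psi> else Neg \<psi>)"

lemma sat_signed [simp]: "sat M s (signed b \<psi>) \<longleftrightarrow> (b \<longleftrightarrow> sat M s \<psi>)"
  by (simp add: signed_def)

lemma fv_signed [simp]: "fv (signed b \<psi>) = fv \<psi>"
  by (simp add: signed_def)

definition pattern_fml ::
    "(nat \<Rightarrow> 'w) \<Rightarrow> (nat \<Rightarrow> 'v \<Rightarrow> 'w) \<Rightarrow> 'w list \<Rightarrow> nat \<Rightarrow> nat set \<Rightarrow> ('f, 'r, 'v) fml \<Rightarrow> ('f, 'r, 'w) fml" where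
  "pattern_fml fr \<sigma> xs n S \<phi> =
     foldr Ex xs (conjs (map (\<lambda>i. signed (i \<in> S) (rename_fml fr (\<sigma> i) 0 \<phi>)) [0..<n]))"

lemma sat_pattern_fml:
  assumes "inj fr" "\<And>i v. \<sigma> i v \<notin> range fr"
  shows "sat M s (pattern_fml fr \<sigma> xs n S \<phi>) \<longleftrightarrow>
    (\<exists>s'. (\<forall>v. v \<notin> set xs \<longrightarrow> s' v = s v) \<and> (\<forall>i<n. i \<in> S \<longleftrightarrow> sat M (s' \<circ> \<sigma> i) \<phi>))"
proof -
  have "sat M s' (rename_fml fr (\<sigma> i) 0 \<phi>) = sat M (s' \<circ> \<sigma> i) \<phi>" for s' i
    using assms by (intro sat_rename_fml) auto
  then have "sat M s' (conjs (map (\<lambda>i. signed (i \<in> S) (rename_fml fr (\<sigma> i) 0 \<phi>)) [0..<n]))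
      \<longleftrightarrow> (\<forall>i<n. i \<in> S \<longleftrightarrow> sat M (s' \<circ> \<sigma> i) \<phi>)" for s'
    unfolding sat_conjs by auto
  then show ?thesis
    by (simp add: pattern_fml_def sat_foldr_Ex)
qed

lemma fv_pattern_fml: "fv (pattern_fml fr \<sigma> xs n S \<phi>) \<subseteq> (\<Union>i<n. \<sigma> i ` fv \<phi>) - set xs"
  using fv_rename_fml by (fastforce simp: pattern_fml_def fv_foldr_Ex fv_conjs)

lemma sat_pattern_fml_iff_realizes_pattern:
  fixes \<phi> :: "('f, 'r, 'x + 'y) fml"
  defines "X \<equiv> Inl -` fv \<phi>"
  assumes "inj fr" "\<And>i v. \<sigma> i v \<notin> range fr"
    and "set xs = X" "inj_on xv X" "\<And>i x. \<sigma> i (Inl x) = xv x"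
    and "\<And>i y. i < n \<Longrightarrow> Inr y \<in> fv \<phi> \<Longrightarrow> \<sigma> i (Inr y) \<notin> xv ` X \<and> s (\<sigma> i (Inr y)) = W i y"
  shows "sat M s (pattern_fml fr \<sigma> (map xv xs) n S \<phi>) \<longleftrightarrow> realizes_pattern M \<phi> n W S"
proof -
  have agree: "sat M (s' \<circ> \<sigma> i) \<phi> \<longleftrightarrow> sat M (case_sum d (W i)) \<phi>"
    if "i < n" "\<forall>v. v \<notin> xv ` X \<longrightarrow> s' v = s v" "\<forall>x\<in>X. s' (xv x) = d x" for s' d i
  proof (rule sat_cong, intro ballI)
    fix v assume "v \<in> fv \<phi>"
    then show "(s' \<circ> \<sigma> i) v = case_sum d (W i) v"
      using that assms(6,7) by (cases v) (auto simp: X_def)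
  qed
  show ?thesis
  proof
    assume "sat M s (pattern_fml fr \<sigma> (map xv xs) n S \<phi>)"
    then obtain s' where "\<forall>v. v \<notin> xv ` X \<longrightarrow> s' v = s v" "\<forall>i<n. i \<in> S \<longleftrightarrow> sat M (s' \<circ> \<sigma> i) \<phi>"
      using assms(2,3,4) by (auto simp: sat_pattern_fml)
    with agree[of _ s' "s' \<circ> xv"] show "realizes_pattern M \<phi> n W S"
      unfolding realizes_pattern_def by (intro exI[of _ "s' \<circ> xv"]) simp
  next
    assume "realizes_pattern M \<phi> n W S"
    then obtain d where d: "\<forall>i<n. i \<in> S \<longleftrightarrow> sat M (case_sum d (W i)) \<phi>"
      unfolding realizes_pattern_def by blast
    define s' where "s' v = (if v \<in> xv ` X then d (inv_into X xv v) else s v)" for v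
    have "\<forall>i<n. i \<in> S \<longleftrightarrow> sat M (s' \<circ> \<sigma> i) \<phi>"
      using d agree[of _ s' d] assms(5) by (simp add: s'_def)
    then show "sat M s (pattern_fml fr \<sigma> (map xv xs) n S \<phi>)"
      unfolding sat_pattern_fml[OF assms(2,3)] using assms(4)
      by (intro exI[of _ s']) (simp add: s'_def)
  qed
qed

text \<open>The \<open>y\<close>-slots of instance \<open>u\<close> are given by \<open>src\<close> either as entries \<open>c \<epsilon> ! \<alpha>\<close> of a
  tuple, which become the free variables \<open>Inl (0, \<alpha>)\<close>, or as parameters; all other
  slots \<open>(i, y)\<close> become parameter variables \<open>Inr (g (i, y))\<close>.\<close>
lemma realizes_pattern_definable:
  fixes \<phi> :: "('f, 'r, 'x + 'y) fml" and src :: "'y \<Rightarrow> nat + 'a" and c :: "nat \<Rightarrow> 'a list"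
  assumes src_tuple: "\<And>y \<alpha>. Inr y \<in> fv \<phi> \<Longrightarrow> src y = Inl \<alpha> \<Longrightarrow> \<alpha> < L"
    and src_param: "\<And>y p. Inr y \<in> fv \<phi> \<Longrightarrow> src y = Inr p \<Longrightarrow> p \<in> P"
    and W_param: "\<And>i y. i < n \<Longrightarrow> i \<noteq> u \<Longrightarrow> Inr y \<in> fv \<phi> \<Longrightarrow> W i y \<in> P"
  shows "\<exists>(\<Psi> :: ('f, 'r, nat \<times> nat + nat) fml) e.
    fv \<Psi> \<subseteq> {Inl (0, \<alpha>) | \<alpha>. \<alpha> < L} \<union> Inr ` {j. e j \<in> P} \<and>
    (\<forall>\<epsilon>. sat M (\<lambda>v. case v of Inl (_, \<alpha>) \<Rightarrow> c \<epsilon> ! \<alpha> | Inr j \<Rightarrow> e j) \<Psi>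
      \<longleftrightarrow> realizes_pattern M \<phi> n (W(u := case_sum ((!) (c \<epsilon>)) id \<circ> src)) S)"
proof -
  define X where "X = Inl -` fv \<phi>"
  define Y where "Y = Inr -` fv \<phi>"
  obtain hx :: "'x \<Rightarrow> nat" where hx: "inj_on hx X"
    using finite_imp_inj_to_nat_seg[OF finite_vars_Inl[of \<phi>]] unfolding X_def by blast
  have "finite ({..<n} \<times> Y)"
    using finite_vars_Inr[of \<phi>] by (simp add: Y_def)
  then obtain g :: "nat \<times> 'y \<Rightarrow> nat" where g: "inj_on g ({..<n} \<times> Y)"
    using finite_imp_inj_to_nat_seg[of "{..<n} \<times> Y"] by blast
  obtain xs where xs: "set xs = X"
    using finite_list[OF finite_vars_Inl[of \<phi>]] unfolding X_def by blast
  define xv :: "'x \<Rightarrow> nat \<times> nat + nat" where "xv x = Inl (1, hx x)" for x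
  define fr :: "nat \<Rightarrow> nat \<times> nat + nat" where "fr j = Inl (j + 2, 0)" for j
  define \<sigma> where "\<sigma> i v = (case v of Inl x \<Rightarrow> xv x | Inr y \<Rightarrow> (case src y of
      Inl \<alpha> \<Rightarrow> if i = u then Inl (0, \<alpha>) else Inr (g (i, y)) | Inr _ \<Rightarrow> Inr (g (i, y))))" for i v
  define V where "V = W(u := projr \<circ> src)"
  define e where "e j = case_prod V (inv_into ({..<n} \<times> Y) g j)" for j
  define s :: "nat \<Rightarrow> nat \<times> nat + nat \<Rightarrow> 'a"
    where "s \<epsilon> = (\<lambda>v. case v of Inl (_, \<alpha>) \<Rightarrow> c \<epsilon> ! \<alpha> | Inr j \<Rightarrow> e j)" for \<epsilon>
  define \<Psi> where "\<Psi> = pattern_fml fr \<sigma> (map xv xs) n S \<phi>"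
  have e_g: "e (g (i, y)) = V i y" if "i < n" "Inr y \<in> fv \<phi>" for i y
    using that g by (simp add: e_def Y_def)
  have fv_\<Psi>: "fv \<Psi> \<subseteq> {Inl (0, \<alpha>) | \<alpha>. \<alpha> < L} \<union> Inr ` {j. e j \<in> P}"
  proof
    fix v assume "v \<in> fv \<Psi>"
    moreover have "fv \<Psi> \<subseteq> (\<Union>i<n. \<sigma> i ` fv \<phi>) - xv ` X"
      using fv_pattern_fml[of fr \<sigma> "map xv xs" n S \<phi>] xs by (simp add: \<Psi>_def)
    ultimately obtain i w where i: "i < n" and w: "w \<in> fv \<phi>" and v: "v = \<sigma> i w" "v \<notin> xv ` X"
      by blast
    show "v \<in> {Inl (0, \<alpha>) | \<alpha>. \<alpha> < L} \<union> Inr ` {j. e j \<in> P}"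
    proof (cases w)
      case (Inl x)
      with v w show ?thesis
        by (simp add: \<sigma>_def X_def)
    next
      case (Inr y)
      with w have y: "Inr y \<in> fv \<phi>" by simp
      show ?thesis
      proof (cases "src y")
        case (Inl \<alpha>)
        then show ?thesis
          using v Inr e_g[OF i y] src_tuple[OF y] W_param[OF i _ y] by (auto simp: \<sigma>_def V_def)
      next
        case (Inr p)
        then show ?thesis
          using v \<open>w = Inr y\<close> e_g[OF i y] src_param[OF y] W_param[OF i _ y]
          by (auto simp: \<sigma>_def V_def)
      qed
    qed
  qed
  have sem: "sat M (s \<epsilon>) \<Psi> \<longleftrightarrow> realizes_pattern M \<phi> n (W(u := case_sum ((!) (c \<epsilon>)) id \<circ> src)) S"
    for \<epsilon>
    unfolding \<Psi>_def
  proof (rule sat_pattern_fml_iff_realizes_pattern)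
    show "inj fr" "\<And>i v. \<sigma> i v \<notin> range fr"
      by (auto simp: inj_def fr_def \<sigma>_def xv_def split: sum.split)
    show "set xs = Inl -` fv \<phi>" "inj_on xv (Inl -` fv \<phi>)" "\<And>i x. \<sigma> i (Inl x) = xv x"
      using xs hx by (auto simp: X_def xv_def \<sigma>_def inj_on_def)
    show "\<sigma> i (Inr y) \<notin> xv ` Inl -` fv \<phi>
        \<and> s \<epsilon> (\<sigma> i (Inr y)) = (W(u := case_sum ((!) (c \<epsilon>)) id \<circ> src)) i y"
      if "i < n" "Inr y \<in> fv \<phi>" for i y
      using e_g[OF that] by (auto simp: \<sigma>_def xv_def s_def V_def split: sum.split)
  qed
  show ?thesis
    using fv_\<Psi> sem unfolding s_def by blast
qed

lemma realizes_pattern_indisc_swap: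
  fixes \<phi> :: "('f, 'r, 'x + 'y) fml" and src :: "'y \<Rightarrow> nat + 'a"
  assumes "indisc M P L N c" "enat 1 < N"
    and "\<And>y \<alpha>. Inr y \<in> fv \<phi> \<Longrightarrow> src y = Inl \<alpha> \<Longrightarrow> \<alpha> < L"
    and "\<And>y p. Inr y \<in> fv \<phi> \<Longrightarrow> src y = Inr p \<Longrightarrow> p \<in> P"
    and "\<And>i y. i < n \<Longrightarrow> i \<noteq> u \<Longrightarrow> Inr y \<in> fv \<phi> \<Longrightarrow> W i y \<in> P"
  shows "realizes_pattern M \<phi> n (W(u := case_sum ((!) (c 1)) id \<circ> src)) S
     \<longleftrightarrow> realizes_pattern M \<phi> n (W(u := case_sum ((!) (c 0)) id \<circ> src)) S"
proof -
  have "\<exists>(\<Psi> :: ('f, 'r, nat \<times> nat + nat) fml) e.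
    fv \<Psi> \<subseteq> {Inl (0, \<alpha>) | \<alpha>. \<alpha> < L} \<union> Inr ` {j. e j \<in> P} \<and>
    (\<forall>\<epsilon>. sat M (\<lambda>v. case v of Inl (_, \<alpha>) \<Rightarrow> c \<epsilon> ! \<alpha> | Inr j \<Rightarrow> e j) \<Psi>
      \<longleftrightarrow> realizes_pattern M \<phi> n (W(u := case_sum ((!) (c \<epsilon>)) id \<circ> src)) S)"
    using assms(3-5) by (rule realizes_pattern_definable)
  then obtain \<Psi> :: "('f, 'r, nat \<times> nat + nat) fml" and e
    where fv_\<Psi>: "fv \<Psi> \<subseteq> {Inl (0, \<alpha>) | \<alpha>. \<alpha> < L} \<union> Inr ` {j. e j \<in> P}"
      and sem: "\<forall>\<epsilon>. sat M (\<lambda>v. case v of Inl (_, \<alpha>) \<Rightarrow> c \<epsilon> ! \<alpha> | Inr j \<Rightarrow> e j) \<Psi>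
        \<longleftrightarrow> realizes_pattern M \<phi> n (W(u := case_sum ((!) (c \<epsilon>)) id \<circ> src)) S"
    by blast
  show ?thesis
    using indisc_swap_0_1[OF assms(1,2) fv_\<Psi>] sem by simp
qed

lemma asg3_eq_case_sum: "asg3 d y z = case_sum d (case_sum y z)"
  by (simp add: asg3_def fun_eq_iff split: sum.split)

text \<open>An element of \<open>params t\<close> outside \<open>params s\<close> lies in \<open>c s\<close> and in no other \<open>c s'\<close>.\<close>
lemma params_escape_unique:
  assumes "p \<in> params A I n c t" "p \<notin> params A I n c s" "p \<notin> params A I n c s'"
  shows "s = s'"
  using assms by (auto simp: params_def)

locale J_witnesses =
  fixes M :: "('f, 'r, 'a) struc" and \<phi> :: "('f, 'r, 'i + nat + nat) fml" and k m :: nat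
    and A B :: "'a set" and I :: "'t set" and n :: "'t \<Rightarrow> enat" and L :: "'t \<Rightarrow> nat"
    and c :: "'t \<Rightarrow> nat \<Rightarrow> 'a list" and d :: "'i \<Rightarrow> 'a"
    and \<alpha> :: "'t \<Rightarrow> nat \<Rightarrow> nat" and b :: "'t \<Rightarrow> nat \<Rightarrow> 'a"
  assumes K0: "K0 M A B I n L c d"
    and fv_\<phi>: "fv \<phi> \<subseteq> range Inl \<union> Inr ` Inl ` {..<k} \<union> Inr ` Inr ` {..<m}"
    and witness: "\<And>t. t \<in> Jset M \<phi> k m A I n L c d \<Longrightarrow>
      (\<forall>i<k. \<alpha> t i < L t) \<and> (\<forall>j<m. b t j \<in> params A I n c t)
      \<and> sat M (asg3 d (\<lambda>i. c t 0 ! \<alpha> t i) (b t)) \<phi> \<and> \<not> sat M (asg3 d (\<lambda>i. c t 1 ! \<alpha> t i) (b t)) \<phi>"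
begin

abbreviation J :: "'t set" where
  "J \<equiv> Jset M \<phi> k m A I n L c d"

definition inst :: "'t \<Rightarrow> nat \<Rightarrow> nat + nat \<Rightarrow> 'a" where
  "inst t \<epsilon> = case_sum (\<lambda>i. c t \<epsilon> ! \<alpha> t i) (b t)"

definition uses :: "'t \<Rightarrow> 't \<Rightarrow> bool" where
  "uses t s \<longleftrightarrow> (\<exists>j<m. b t j \<notin> params A I n c s)"

lemma J_memD: "t \<in> J \<Longrightarrow> t \<in> I \<and> enat 1 < n t"
  using less_le_trans[of "enat 1" 2 "n t"] by (auto simp: Jset_def numeral_eq_enat)

lemma inst_entry_in_params:
  assumes "t \<in> J" "s \<noteq> t" "\<epsilon> \<le> 1" "i < k"
  shows "c t \<epsilon> ! \<alpha> t i \<in> params A I n c s"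
proof -
  have "t \<in> I" "enat \<epsilon> < n t"
    using J_memD[OF assms(1)] le_less_trans[of "enat \<epsilon>" "enat 1" "n t"] assms(3) by auto
  moreover have "length (c t \<epsilon>) = L t" "\<alpha> t i < L t"
    using K0 witness[OF assms(1)] \<open>t \<in> I\<close> \<open>enat \<epsilon> < n t\<close> assms(4) by (auto simp: K0_def)
  ultimately show ?thesis
    using assms(2) by (force simp: params_def cset_def)
qed

lemma card_uses_le:
  assumes "finite F" "t \<in> J"
  shows "card {s\<in>F. uses t s} \<le> m"
proof -
  have "card {s\<in>F. b t j \<notin> params A I n c s} \<le> 1" if "j < m" for j
    using assms witness[OF assms(2)] that params_escape_unique[of "b t j" A I n c t]
    by (auto simp: card_le_Suc0_iff_eq)
  then have "(\<Sum>j<m. card {s\<in>F. b t j \<notin> params A I n c s}) \<le> (\<Sum>j<m. 1)"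
    by (intro sum_mono) simp
  moreover have "card {s\<in>F. uses t s} \<le> (\<Sum>j<m. card {s\<in>F. b t j \<notin> params A I n c s})"
  proof -
    have "{s\<in>F. uses t s} = (\<Union>j<m. {s\<in>F. b t j \<notin> params A I n c s})"
      by (auto simp: uses_def)
    then show ?thesis
      by (simp add: card_UN_le)
  qed
  ultimately show ?thesis
    by simp
qed

lemma Inr_in_fv_\<phi>: "Inr y \<in> fv \<phi> \<Longrightarrow> (\<exists>i<k. y = Inl i) \<or> (\<exists>j<m. y = Inr j)"
  using fv_\<phi> by auto

text \<open>Moving instance \<open>u\<close> between \<open>c t 1\<close> and \<open>c t 0\<close> is allowed by the indiscernibility
  of \<open>c t\<close> over \<open>params t\<close>, which contains all other parameters since the indices are
  independent.\<close>
lemma realizes_pattern_inst_swap: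
  assumes \<tau>: "inj_on \<tau> {..<N}" "\<tau> ` {..<N} \<subseteq> J"
    and indep: "\<And>i j. i < N \<Longrightarrow> j < N \<Longrightarrow> i \<noteq> j \<Longrightarrow> \<not> uses (\<tau> i) (\<tau> j)"
    and "u < N" "\<And>i. lev i \<le> 1"
  shows "realizes_pattern M \<phi> N (\<lambda>i. inst (\<tau> i) ((lev(u := 1)) i)) S
    \<longleftrightarrow> realizes_pattern M \<phi> N (\<lambda>i. inst (\<tau> i) ((lev(u := 0)) i)) S"
proof -
  define t where "t = \<tau> u"
  define W where "W i = inst (\<tau> i) (lev i)" for i
  define src :: "nat + nat \<Rightarrow> nat + 'a" where "src = case_sum (\<lambda>i. Inl (\<alpha> t i)) (\<lambda>j. Inr (b t j))"
  have "t \<in> J"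
    using \<tau>(2) \<open>u < N\<close> by (auto simp: t_def)
  have W_upd: "W(u := case_sum ((!) (c t \<epsilon>)) id \<circ> src) = (\<lambda>i. inst (\<tau> i) ((lev(u := \<epsilon>)) i))" for \<epsilon>
    by (auto simp: fun_eq_iff W_def src_def inst_def t_def split: sum.split)
  have "realizes_pattern M \<phi> N (W(u := case_sum ((!) (c t 1)) id \<circ> src)) S
      \<longleftrightarrow> realizes_pattern M \<phi> N (W(u := case_sum ((!) (c t 0)) id \<circ> src)) S"
  proof (rule realizes_pattern_indisc_swap)
    show "indisc M (params A I n c t) (L t) (n t) (c t)" "enat 1 < n t"
      using K0 J_memD[OF \<open>t \<in> J\<close>] by (auto simp: K0_def)
    show "\<alpha>' < L t" if "Inr y \<in> fv \<phi>" "src y = Inl \<alpha>'" for y \<alpha>'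
      using that Inr_in_fv_\<phi>[OF that(1)] witness[OF \<open>t \<in> J\<close>] by (auto simp: src_def)
    show "p \<in> params A I n c t" if "Inr y \<in> fv \<phi>" "src y = Inr p" for y p
      using that Inr_in_fv_\<phi>[OF that(1)] witness[OF \<open>t \<in> J\<close>] by (auto simp: src_def)
    show "W i y \<in> params A I n c t" if "i < N" "i \<noteq> u" "Inr y \<in> fv \<phi>" for i y
    proof -
      have "\<tau> i \<in> J" "\<tau> i \<noteq> t"
        using \<tau> that \<open>u < N\<close> by (auto simp: t_def dest: inj_onD)
      then show ?thesis
        using Inr_in_fv_\<phi>[OF that(3)] inst_entry_in_params assms(5) indep[of i u] that \<open>u < N\<close>
        by (auto simp: W_def inst_def uses_def t_def)
    qed
  qed
  then show ?thesis
    unfolding W_upd .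
qed

text \<open>Starting from the instances at \<open>c t 1\<close> outside \<open>S\<close> and at \<open>c t 0\<close> inside \<open>S\<close>, where
  \<open>d\<close> realizes \<open>S\<close>, the instances outside \<open>S\<close> are moved to \<open>c t 0\<close> one at a time.\<close>
lemma shatters_if_independent:
  assumes \<tau>: "inj_on \<tau> {..<N}" "\<tau> ` {..<N} \<subseteq> J"
    and indep: "\<And>i j. i < N \<Longrightarrow> j < N \<Longrightarrow> i \<noteq> j \<Longrightarrow> \<not> uses (\<tau> i) (\<tau> j)"
  shows "shatters M \<phi> N (\<lambda>i. inst (\<tau> i) 0)"
  unfolding shatters_def
proof (intro allI impI)
  fix S assume "S \<subseteq> {..<N}"
  define lev :: "nat set \<Rightarrow> nat \<Rightarrow> nat" where "lev V i = (if i \<in> {..<N} - S - V then 1 else 0)" for V i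
  have base: "realizes_pattern M \<phi> N (\<lambda>i. inst (\<tau> i) (lev {} i)) S"
  proof -
    have "i \<in> S \<longleftrightarrow> sat M (case_sum d (inst (\<tau> i) (lev {} i))) \<phi>" if "i < N" for i
      using witness[of "\<tau> i"] \<tau>(2) that by (auto simp: lev_def inst_def asg3_eq_case_sum)
    then show ?thesis
      unfolding realizes_pattern_def by blast
  qed
  have step: "realizes_pattern M \<phi> N (\<lambda>i. inst (\<tau> i) (lev (insert u V) i)) S"
    if "u \<in> {..<N} - S" "u \<notin> V" "realizes_pattern M \<phi> N (\<lambda>i. inst (\<tau> i) (lev V i)) S" for u V
  proof -
    have lev_upd: "(lev V)(u := 1) = lev V" "(lev V)(u := 0) = lev (insert u V)"
      using that(1,2) by (auto simp: lev_def)
    have "u < N" "\<And>i. lev V i \<le> 1"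
      using that(1) by (auto simp: lev_def)
    with realizes_pattern_inst_swap[OF \<tau> indep, of u "lev V" S] that(3) show ?thesis
      unfolding lev_upd by blast
  qed
  have "realizes_pattern M \<phi> N (\<lambda>i. inst (\<tau> i) (lev ({..<N} - S) i)) S"
    by (rule finite_subset_induct'[of "{..<N} - S" "{..<N} - S"]) (use base step in auto)
  then show "realizes_pattern M \<phi> N (\<lambda>i. inst (\<tau> i) 0) S"
    by (simp add: lev_def)
qed

lemma card_le_if_not_shatters:
  assumes "\<And>W. \<not> shatters M \<phi> N W" "finite F" "F \<subseteq> J"
  shows "card F \<le> (2 * m + 1) * N"
proof -
  have out_degree: "\<forall>t\<in>F. card {s\<in>F. uses t s} \<le> m"
    using card_uses_le[OF assms(2)] assms(3) by blast
  obtain T where T: "T \<subseteq> F" "\<forall>t\<in>T. \<forall>s\<in>T. uses t s \<longrightarrow> t = s"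
      "card F \<le> (2 * m + 1) * card T"
    using large_independent_subset[OF assms(2) out_degree] by blast
  have "card T < N"
  proof (rule ccontr)
    assume "\<not> card T < N"
    then have "N \<le> card T"
      by simp
    then obtain T' where T': "T' \<subseteq> T" "card T' = N" "finite T'"
      by (rule obtain_subset_with_card_n)
    obtain \<tau> where "bij_betw \<tau> {0..<card T'} T'"
      using ex_bij_betw_nat_finite[OF T'(3)] by blast
    then have \<tau>: "inj_on \<tau> {..<N}" "\<tau> ` {..<N} = T'"
      using T'(2) by (simp_all add: atLeast0LessThan bij_betw_def)
    have "shatters M \<phi> N (\<lambda>i. inst (\<tau> i) 0)"
    proof (rule shatters_if_independent)
      show "inj_on \<tau> {..<N}" "\<tau> ` {..<N} \<subseteq> J"
        using \<tau> T(1) T'(1) assms(3) by auto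
      show "\<not> uses (\<tau> i) (\<tau> j)" if "i < N" "j < N" "i \<noteq> j" for i j
      proof -
        have "\<tau> i \<in> T" "\<tau> j \<in> T" "\<tau> i \<noteq> \<tau> j"
          using that \<tau> T'(1) inj_on_contraD[OF \<tau>(1) that(3)] by auto
        with T(2) show ?thesis
          by blast
      qed
    qed
    with assms(1) show False
      by blast
  qed
  then have "(2 * m + 1) * card T \<le> (2 * m + 1) * N"
    by (intro mult_le_mono2) simp
  with T(3) show ?thesis
    by linarith
qed

end

lemma J_witnesses_exist:
  assumes "K0 M A B I n L c d"
    and "fv \<phi> \<subseteq> range Inl \<union> Inr ` Inl ` {..<k} \<union> Inr ` Inr ` {..<m}"
  obtains \<alpha> b where "J_witnesses M \<phi> k m A B I n L c d \<alpha> b"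
proof -
  have "\<forall>t\<in>Jset M \<phi> k m A I n L c d. \<exists>\<alpha>' b'. (\<forall>i<k. \<alpha>' i < L t) \<and> (\<forall>j<m. b' j \<in> params A I n c t)
      \<and> sat M (asg3 d (\<lambda>i. c t 0 ! \<alpha>' i) b') \<phi> \<and> \<not> sat M (asg3 d (\<lambda>i. c t 1 ! \<alpha>' i) b') \<phi>"
    unfolding Jset_def mem_Collect_eq by blast
  from bchoice[OF this] obtain \<alpha> where "\<forall>t\<in>Jset M \<phi> k m A I n L c d. \<exists>b'. (\<forall>i<k. \<alpha> t i < L t)
      \<and> (\<forall>j<m. b' j \<in> params A I n c t)
      \<and> sat M (asg3 d (\<lambda>i. c t 0 ! \<alpha> t i) b') \<phi> \<and> \<not> sat M (asg3 d (\<lambda>i. c t 1 ! \<alpha> t i) b') \<phi>"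
    by blast
  from bchoice[OF this] obtain b where "\<forall>t\<in>Jset M \<phi> k m A I n L c d. (\<forall>i<k. \<alpha> t i < L t)
      \<and> (\<forall>j<m. b t j \<in> params A I n c t)
      \<and> sat M (asg3 d (\<lambda>i. c t 0 ! \<alpha> t i) (b t)) \<phi> \<and> \<not> sat M (asg3 d (\<lambda>i. c t 1 ! \<alpha> t i) (b t)) \<phi>"
    by blast
  with assms show ?thesis
    by (intro that[of \<alpha> b]) (simp add: J_witnesses_def)
qed

theorem claim2p17:
  fixes M :: "('f, 'r, 'a) struc"
    and \<phi> :: "('f, 'r, 'i + nat + nat) fml"
    and k m :: nat
  assumes "dependent M"
    and "fv \<phi> \<subseteq> range Inl \<union> Inr ` Inl ` {..<k} \<union> Inr ` Inr ` {..<m}"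
  shows "\<exists>N::nat. \<forall>(A :: 'a set) (B :: 'a set) (I :: 't set) n L c (d :: 'i \<Rightarrow> 'a).
           K0 M A B I n L c d \<longrightarrow>
           finite (Jset M \<phi> k m A I n L c d) \<and> card (Jset M \<phi> k m A I n L c d) \<le> N"
proof -
  obtain N where N: "\<And>W. \<not> shatters M \<phi> N W"
    using dependent_imp_shatters_bounded[OF assms(1)] by blast
  show ?thesis
  proof (intro exI[of _ "(2 * m + 1) * N"] allI impI)
    fix A B :: "'a set" and I :: "'t set" and n L c and d :: "'i \<Rightarrow> 'a"
    assume "K0 M A B I n L c d"
    then obtain \<alpha> b where "J_witnesses M \<phi> k m A B I n L c d \<alpha> b"
      using J_witnesses_exist assms(2) by blast
    then interpret J_witnesses M \<phi> k m A B I n L c d \<alpha> b .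
    show "finite J \<and> card J \<le> (2 * m + 1) * N"
      by (rule finite_if_finite_subsets_card_bdd) (rule card_le_if_not_shatters[OF N])
  qed
qed

end
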